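(* There exist absolute constants $c>0$ and $\rho_0\in(0,1/2]$ such that, for all $\rho\in(0,\rho_0]$, $n\ge2$, $1\le m\le n-1$ and $s\in\big(0,1/(m\ln(1/\rho))\big]$, $$\mathcal{E}^{\mathrm{TW}}_{m,s}\ge(c/s)^m(1/\rho)^{\lfloor(n+m-1)/2\rfloor}.$$
   Context: $m$-twist system with parameter $\rho$ on $n$ agents: at each time $t$ the agents are relabeled so that their positions satisfy $x_1\le\dots\le x_n$. A partition of $[n]$ into at most $m$ intervals of consecutive indices $[u_{t,l},v_{t,l}]$ (blocks) is chosen. The next sorted positions $y_1\le\dots\le y_n$ satisfy, for every block $[u,v]$ and $i\in[u,v]$, $$(1-\rho)x_u+\rho x_{\min\{i+1,v\}}\le y_i\le\rho x_{\max\{i-1,u\}}+(1-\rho)x_v.$$ The $s$-energy is $\sum_{t\ge0}\sum_l(x_{v_{t,l}}(t)-x_{u_{t,l}}(t))^s$. $\mathcal{E}^{\mathrm{TW}}_{m,s}$ is its supremum over all $m$-twist systems on $n$ agents with initial positions in $[0,1]$. *)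

theory Defs
  imports "HOL-Analysis.Analysis"
begin

text \<open>Agents are indexed 0..n-1 (0-based). Positions at time t: x t :: nat => real,
  always sorted (relabelled). A block is a pair (u,v) of indices with u <= v.\<close>

definition sorted_pos :: "nat \<Rightarrow> (nat \<Rightarrow> real) \<Rightarrow> bool" where
  "sorted_pos n x \<longleftrightarrow> (\<forall>i. Suc i < n \<longrightarrow> x i \<le> x (Suc i))"

definition twist_partition :: "nat \<Rightarrow> nat \<Rightarrow> (nat \<times> nat) list \<Rightarrow> bool" where
  "twist_partition n m P \<longleftrightarrow>
     P \<noteq> [] \<and> length P \<le> m \<and> fst (hd P) = 0 \<and> snd (last P) = n - 1 \<and>
     (\<forall>l<length P. fst (P ! l) \<le> snd (P ! l)) \<and>
     (\<forall>l. Suc l < length P \<longrightarrow> fst (P ! Suc l) = Suc (snd (P ! l)))"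

definition twist_step :: "real \<Rightarrow> (nat \<times> nat) list \<Rightarrow> (nat \<Rightarrow> real) \<Rightarrow> (nat \<Rightarrow> real) \<Rightarrow> bool" where
  "twist_step \<rho> P x y \<longleftrightarrow>
     (\<forall>(u, v) \<in> set P. \<forall>i \<in> {u..v}.
        (1 - \<rho>) * x u + \<rho> * x (min (i + 1) v) \<le> y i \<and>
        y i \<le> \<rho> * x (max (i - 1) u) + (1 - \<rho>) * x v)"

definition twist_system :: "nat \<Rightarrow> nat \<Rightarrow> real \<Rightarrow> (nat \<Rightarrow> nat \<Rightarrow> real) \<Rightarrow> (nat \<Rightarrow> (nat \<times> nat) list) \<Rightarrow> bool" where
  "twist_system n m \<rho> x P \<longleftrightarrow>
     (\<forall>i<n. 0 \<le> x 0 i \<and> x 0 i \<le> 1) \<and>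
     (\<forall>t. sorted_pos n (x t) \<and> twist_partition n m (P t) \<and> twist_step \<rho> (P t) (x t) (x (Suc t)))"

definition s_energy :: "real \<Rightarrow> (nat \<Rightarrow> nat \<Rightarrow> real) \<Rightarrow> (nat \<Rightarrow> (nat \<times> nat) list) \<Rightarrow> ennreal" where
  "s_energy s x P = (\<Sum>t. sum_list (map (\<lambda>(u, v). ennreal ((x t v - x t u) powr s)) (P t)))"

definition E_TW :: "nat \<Rightarrow> real \<Rightarrow> nat \<Rightarrow> real \<Rightarrow> ennreal" where
  "E_TW n \<rho> m s = (SUP xP \<in> {(x, P). twist_system n m \<rho> x P}. s_energy s (fst xP) (snd xP))"

end

theory Submission
  imports Defs
begin

text \<open>For one block, positions \<open>1/2 + \<lambda>\<^sup>t z\<^sub>i / 2\<close> with a suitable odd profile \<open>z\<close> on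
  \<open>[-1, 1]\<close> form a twist system contracting by only \<open>\<lambda> = 1 - 2\<rho>\<^bsup>\<lfloor>n/2\<rfloor>\<^esup>\<close> per step, so its
  \<open>s\<close>-energy is \<open>1/(1 - \<lambda>\<^sup>s) \<ge> 1/(4 s \<rho>\<^bsup>\<lfloor>n/2\<rfloor>\<^esup>)\<close>.
  One more agent and one more block multiply the energy by \<open>1/(96 \<rho> s)\<close>: agent 0 waits on the
  left while a copy of the smaller system, scaled by \<open>\<rho> L\<^sub>j\<close>, runs long enough to collect half of
  its energy; then one step with a single block moves everybody to the start of the next epoch,
  where the scale has shrunk by the factor \<open>1 - 3\<rho> - \<rho>\<^sup>2\<close>. Summing the geometric series over the
  epochs gains \<open>\<rho>\<^sup>s/(1 - (1 - 3\<rho> - \<rho>\<^sup>2)\<^sup>s) \<approx> 1/(\<rho> s)\<close>. Starting the induction with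
  \<open>n - m + 1\<close> agents in one block gives the exponent \<open>\<lfloor>(n - m + 1)/2\<rfloor> + m - 1 = \<lfloor>(n + m - 1)/2\<rfloor>\<close>.\<close>

lemma power_powr_commute: "(x ^ t) powr s = (x powr s) ^ t" for x :: real
  by (induction t) (simp_all add: powr_mult)

lemma suminf_geometric_ennreal:
  fixes q C :: real
  assumes "0 \<le> q" "q < 1" "0 \<le> C"
  shows "(\<Sum>t. ennreal (C * q ^ t)) = ennreal (C / (1 - q))"
proof -
  have "(\<lambda>t. C * q ^ t) sums (C * (1 / (1 - q)))"
    using geometric_sums[of q] assms by (intro sums_mult) auto
  then show ?thesis
    using assms by (intro suminf_ennreal_eq) auto
qed

lemma one_minus_powr_le:
  fixes l s :: real
  assumes "1/2 \<le> l" "l \<le> 1" "0 \<le> s"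
  shows "1 - l powr s \<le> 2 * s * (1 - l)"
proof -
  have "1 + s * ln l \<le> l powr s"
    using exp_ge_add_one_self[of "s * ln l"] assms by (simp add: powr_def)
  moreover have "- ln l \<le> 2 * (1 - l)"
  proof -
    have "0 \<le> (2 * l - 1) * (1 - l)"
      using assms by simp
    then have "1 / l - 1 \<le> 2 * (1 - l)"
      using assms by (simp add: field_simps)
    then show ?thesis
      using ln_le_minus_one[of "1 / l"] assms by (simp add: ln_div)
  qed
  then have "s * - ln l \<le> s * (2 * (1 - l))"
    using assms by (intro mult_left_mono) auto
  ultimately have "1 - l powr s \<le> s * (2 * (1 - l))"
    by simp
  then show ?thesis
    by (simp add: algebra_simps)
qed

lemma suminf_powr_power_ge:
  fixes l s :: real
  assumes "1/2 \<le> l" "l < 1" "0 < s"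
  shows "ennreal (1 / (2 * s * (1 - l))) \<le> (\<Sum>t. ennreal ((l ^ t) powr s))"
proof -
  have q: "0 \<le> l powr s" "l powr s < 1"
    using assms by (auto simp: powr01_less_one)
  have "(\<Sum>t. ennreal ((l ^ t) powr s)) = (\<Sum>t. ennreal (1 * (l powr s) ^ t))"
    by (simp add: power_powr_commute)
  also have "\<dots> = ennreal (1 / (1 - l powr s))"
    using q by (intro suminf_geometric_ennreal) auto
  finally have "(\<Sum>t. ennreal ((l ^ t) powr s)) = ennreal (1 / (1 - l powr s))" .
  moreover have "1 / (2 * s * (1 - l)) \<le> 1 / (1 - l powr s)"
    using one_minus_powr_le[of l s] q assms by (intro divide_left_mono) auto
  ultimately show ?thesis
    by (simp add: ennreal_leI)
qed

lemma less_suminf_partial_sum: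
  fixes f :: "nat \<Rightarrow> ennreal"
  assumes "a < suminf f"
  shows "\<exists>T. a < (\<Sum>t<T. f t)"
  using assms by (simp add: suminf_eq_SUP less_SUP_iff)

lemma suminf_sum_blocks_le:
  fixes f :: "nat \<Rightarrow> ennreal"
  shows "(\<Sum>j. \<Sum>r<p. f (r + j * p)) \<le> suminf f"
proof -
  have "(\<Sum>j<N. \<Sum>r<p. f (r + j * p)) \<le> suminf f" for N
  proof -
    have "(\<Sum>j<N. \<Sum>r<p. f (r + j * p)) = sum f {..<N * p}"
      by (simp add: sum_mult_product)
    also have "\<dots> \<le> (SUP n. sum f {..<n})"
      by (rule SUP_upper) simp
    finally show ?thesis
      by (simp add: suminf_eq_SUP)
  qed
  then show ?thesis by (simp add: suminf_eq_SUP SUP_least)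
qed

lemma powr_ge_one_third:
  fixes \<rho> s :: real
  assumes "0 < \<rho>" "s * ln (1 / \<rho>) \<le> 1"
  shows "1/3 \<le> \<rho> powr s"
proof -
  have "exp (-1) \<le> \<rho> powr s"
    using assms by (simp add: powr_def ln_div)
  moreover have "1/3 \<le> exp (-1::real)"
    using exp_le by (simp add: exp_minus field_simps)
  ultimately show ?thesis by linarith
qed

lemma one_le_ln_inverse:
  fixes \<rho> :: real
  assumes "0 < \<rho>" "\<rho> \<le> 1/3"
  shows "1 \<le> ln (1 / \<rho>)"
proof -
  have "\<rho> * exp 1 \<le> \<rho> * 3"
    using exp_le assms by (intro mult_left_mono) auto
  then have "\<rho> * exp 1 \<le> 1"
    using assms by linarith
  then have "exp 1 \<le> 1 / \<rho>"
    using assms by (simp add: field_simps)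
  then show ?thesis
    using assms by (simp add: ln_ge_iff)
qed

definition blocks_energy :: "real \<Rightarrow> (nat \<Rightarrow> real) \<Rightarrow> (nat \<times> nat) list \<Rightarrow> ennreal" where
  "blocks_energy s y Q = sum_list (map (\<lambda>(u, v). ennreal ((y v - y u) powr s)) Q)"

lemma s_energy_eq_suminf_blocks_energy:
  "s_energy s x P = (\<Sum>t. blocks_energy s (x t) (P t))"
  by (simp add: s_energy_def blocks_energy_def)

definition shift_blocks :: "(nat \<times> nat) list \<Rightarrow> (nat \<times> nat) list" where
  "shift_blocks Q = map (\<lambda>(u, v). (Suc u, Suc v)) Q"

definition prepend_agent :: "real \<Rightarrow> real \<Rightarrow> real \<Rightarrow> (nat \<Rightarrow> real) \<Rightarrow> nat \<Rightarrow> real" where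
  "prepend_agent X A \<beta> y i = (if i = 0 then X else A + \<beta> * y (i - 1))"

lemma twist_partition_shift:
  assumes "twist_partition n m Q" "1 \<le> n"
  shows "twist_partition (Suc n) (Suc m) ((0, 0) # shift_blocks Q)"
proof -
  have Q: "Q \<noteq> []" "length Q \<le> m" "fst (Q ! 0) = 0" "snd (last Q) = n - 1"
    "\<And>l. l < length Q \<Longrightarrow> fst (Q ! l) \<le> snd (Q ! l)"
    "\<And>l. Suc l < length Q \<Longrightarrow> fst (Q ! Suc l) = Suc (snd (Q ! l))"
    using assms(1) unfolding twist_partition_def by (auto simp: hd_conv_nth)
  have last: "snd (last (shift_blocks Q)) = n"
    using Q(1,4) assms(2) by (cases "last Q") (simp add: shift_blocks_def last_map)
  show ?thesis
    unfolding twist_partition_def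
  proof (intro conjI allI impI)
    fix l
    assume "l < length ((0, 0) # shift_blocks Q)"
    then show "fst (((0, 0) # shift_blocks Q) ! l) \<le> snd (((0, 0) # shift_blocks Q) ! l)"
      using Q(5)[of "l - 1"] by (cases l) (auto simp: shift_blocks_def split: prod.splits)
  next
    fix l
    assume "Suc l < length ((0, 0) # shift_blocks Q)"
    then show "fst (((0, 0) # shift_blocks Q) ! Suc l) = Suc (snd (((0, 0) # shift_blocks Q) ! l))"
      using Q(3) Q(6)[of "l - 1"] by (cases l) (auto simp: shift_blocks_def split: prod.splits)
  qed (use Q last in \<open>auto simp: shift_blocks_def\<close>)
qed

lemma twist_step_shift:
  assumes step: "twist_step \<rho> Q y y'" and "0 \<le> \<beta>"
  shows "twist_step \<rho> ((0, 0) # shift_blocks Q) (prepend_agent X A \<beta> y) (prepend_agent X A \<beta> y')"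
proof -
  let ?x = "prepend_agent X A \<beta> y" and ?x' = "prepend_agent X A \<beta> y'"
  have "(1 - \<rho>) * ?x (Suc u) + \<rho> * ?x (min (i + 1) (Suc v)) \<le> ?x' i \<and>
        ?x' i \<le> \<rho> * ?x (max (i - 1) (Suc u)) + (1 - \<rho>) * ?x (Suc v)"
    if uv: "(u, v) \<in> set Q" "Suc u \<le> i" "i \<le> Suc v" for u v i
  proof -
    obtain k where k: "i = Suc k" "u \<le> k" "k \<le> v"
      using uv by (cases i) auto
    have "(1 - \<rho>) * y u + \<rho> * y (min (k + 1) v) \<le> y' k"
      "y' k \<le> \<rho> * y (max (k - 1) u) + (1 - \<rho>) * y v"
      using step uv k unfolding twist_step_def by fastforce+
    then have "\<beta> * ((1 - \<rho>) * y u + \<rho> * y (min (k + 1) v)) \<le> \<beta> * y' k"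
      "\<beta> * y' k \<le> \<beta> * (\<rho> * y (max (k - 1) u) + (1 - \<rho>) * y v)"
      using \<open>0 \<le> \<beta>\<close> by (auto intro: mult_left_mono)
    moreover have "min (i + 1) (Suc v) = Suc (min (k + 1) v)"
      "max (i - 1) (Suc u) = Suc (max (k - 1) u)"
      using k by auto
    ultimately show ?thesis
      using k by (simp add: prepend_agent_def algebra_simps)
  qed
  then show ?thesis
    unfolding twist_step_def shift_blocks_def
    by (auto simp: prepend_agent_def algebra_simps)
qed

lemma sorted_pos_prepend_agent:
  assumes "sorted_pos n y" "0 \<le> \<beta>" "X \<le> A + \<beta> * y 0"
  shows "sorted_pos (Suc n) (prepend_agent X A \<beta> y)"
  unfolding sorted_pos_def
proof (intro allI impI)
  fix i
  assume "Suc i < Suc n"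
  then show "prepend_agent X A \<beta> y i \<le> prepend_agent X A \<beta> y (Suc i)"
    using assms mult_left_mono[of "y (i - 1)" "y i" \<beta>]
    by (cases i) (auto simp: sorted_pos_def prepend_agent_def)
qed

lemma blocks_energy_shift:
  "blocks_energy s (prepend_agent X A \<beta> y) ((0, 0) # shift_blocks Q) =
     ennreal (\<beta> powr s) * blocks_energy s y Q"
proof -
  have "ennreal ((prepend_agent X A \<beta> y (Suc v) - prepend_agent X A \<beta> y (Suc u)) powr s) =
      ennreal (\<beta> powr s) * ennreal ((y v - y u) powr s)" for u v
    by (simp add: prepend_agent_def right_diff_distrib[symmetric] powr_mult ennreal_mult)
  then show ?thesis
    unfolding blocks_energy_def shift_blocks_def
    by (induction Q) (auto simp: prepend_agent_def distrib_left)
qed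

text \<open>Positions must stay in \<open>[0, 1]\<close> at all times, not only initially, so that a scaled copy
  of the system can be placed inside a prescribed interval.\<close>
definition confined_twist_energy_ge :: "nat \<Rightarrow> nat \<Rightarrow> real \<Rightarrow> real \<Rightarrow> real \<Rightarrow> bool" where
  "confined_twist_energy_ge n m \<rho> s E \<longleftrightarrow>
     (\<exists>x P. twist_system n m \<rho> x P \<and> (\<forall>t i. i < n \<longrightarrow> x t i \<in> {0..1}) \<and>
        ennreal E \<le> s_energy s x P)"

lemma confined_twist_energy_ge_mono:
  "confined_twist_energy_ge n m \<rho> s E \<Longrightarrow> E' \<le> E \<Longrightarrow> confined_twist_energy_ge n m \<rho> s E'"
  unfolding confined_twist_energy_ge_def by (meson ennreal_leI order_trans)

lemma E_TW_ge_if_confined_twist_energy_ge: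
  "confined_twist_energy_ge n m \<rho> s E \<Longrightarrow> ennreal E \<le> E_TW n \<rho> m s"
  unfolding confined_twist_energy_ge_def E_TW_def
  by (force intro: SUP_upper2)

text \<open>The single-block profile is odd about the centre; its left half sits at \<open>-1 + base_gap i\<close>,
  the gaps growing by the factor \<open>1/\<rho>\<close> towards the centre. This makes shrinking the profile by
  \<open>base_rate n \<rho>\<close> one admissible step.\<close>
definition base_gap :: "nat \<Rightarrow> real \<Rightarrow> nat \<Rightarrow> real" where
  "base_gap n \<rho> i = (if i = 0 then 0 else 2 * \<rho> ^ (n div 2 - i) / (1 + \<rho>))"

definition base_profile :: "nat \<Rightarrow> real \<Rightarrow> nat \<Rightarrow> real" where
  "base_profile n \<rho> i =
     (if 2 * i + 1 < n then -1 + base_gap n \<rho> i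
      else if 2 * i + 1 = n then 0
      else 1 - base_gap n \<rho> (n - 1 - i))"

definition base_rate :: "nat \<Rightarrow> real \<Rightarrow> real" where
  "base_rate n \<rho> = 1 - 2 * \<rho> ^ (n div 2)"

context
  fixes n :: nat and \<rho> :: real
  assumes n_ge_2: "2 \<le> n" and rho_pos: "0 < \<rho>" and rho_le: "\<rho> \<le> 1/8"
begin

lemma base_gap_nonneg: "0 \<le> base_gap n \<rho> i"
  using rho_pos by (simp add: base_gap_def)

lemma base_gap_mono:
  assumes "i \<le> j"
  shows "base_gap n \<rho> i \<le> base_gap n \<rho> j"
proof (cases "i = 0")
  case True
  then show ?thesis
    using base_gap_nonneg by (simp add: base_gap_def)
next
  case False
  have "\<rho> ^ (n div 2 - i) \<le> \<rho> ^ (n div 2 - j)"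
    using rho_pos rho_le assms by (intro power_decreasing) auto
  then show ?thesis
    using False assms rho_pos by (simp add: base_gap_def divide_right_mono)
qed

lemma base_gap_le_one:
  assumes "2 * i + 1 < n"
  shows "base_gap n \<rho> i \<le> 1"
proof -
  have "\<rho> ^ (n div 2 - i) \<le> \<rho> ^ 1"
    using assms rho_pos rho_le by (intro power_decreasing) auto
  then have "2 * \<rho> ^ (n div 2 - i) / (1 + \<rho>) \<le> 1"
    using rho_pos rho_le by (simp add: field_simps)
  then show ?thesis
    by (simp add: base_gap_def)
qed

lemma base_gap_eq_rho_mult:
  assumes "1 \<le> i" "i + 1 \<le> n div 2"
  shows "base_gap n \<rho> i = \<rho> * base_gap n \<rho> (i + 1)"
proof -
  have "n div 2 - i = Suc (n div 2 - (i + 1))"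
    using assms by linarith
  then show ?thesis
    using assms by (simp add: base_gap_def)
qed

lemma base_profile_reflect:
  assumes "i < n"
  shows "base_profile n \<rho> (n - 1 - i) = - base_profile n \<rho> i"
  using assms unfolding base_profile_def
  by (cases "2 * i + 1 < n"; cases "2 * i + 1 = n") (auto simp: algebra_simps)

lemma base_profile_ge:
  assumes "i < n"
  shows "-1 \<le> base_profile n \<rho> i"
proof -
  have "2 * (n - 1 - i) + 1 < n" if "n < 2 * i + 1"
    using that assms by linarith
  then show ?thesis
    using base_gap_nonneg[of i] base_gap_le_one[of "n - 1 - i"]
    unfolding base_profile_def by auto
qed

lemma base_profile_le: "i < n \<Longrightarrow> base_profile n \<rho> i \<le> 1"
  using base_gap_nonneg[of "n - 1 - i"] base_gap_le_one[of i]
  unfolding base_profile_def by auto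

lemma base_profile_nonpos: "2 * i + 1 \<le> n \<Longrightarrow> base_profile n \<rho> i \<le> 0"
  using base_gap_le_one[of i] unfolding base_profile_def by auto

lemma base_profile_nonneg: "i < n \<Longrightarrow> n \<le> 2 * i + 1 \<Longrightarrow> 0 \<le> base_profile n \<rho> i"
  using base_gap_le_one[of "n - 1 - i"] unfolding base_profile_def by auto

lemma base_profile_first: "base_profile n \<rho> 0 = -1"
  using n_ge_2 by (simp add: base_profile_def base_gap_def)

lemma base_profile_last: "base_profile n \<rho> (n - 1) = 1"
  using base_profile_reflect[of 0] base_profile_first n_ge_2 by simp

lemma base_profile_mono:
  assumes "Suc i < n"
  shows "base_profile n \<rho> i \<le> base_profile n \<rho> (Suc i)"
proof -
  consider "2 * Suc i + 1 < n" | "2 * i + 1 \<le> n" "n \<le> 2 * Suc i + 1" | "n < 2 * i + 1"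
    by linarith
  then show ?thesis
  proof cases
    case 1
    then show ?thesis
      using base_gap_mono[of i "Suc i"] by (simp add: base_profile_def)
  next
    case 2
    then show ?thesis
      using base_profile_nonpos[of i] base_profile_nonneg[of "Suc i"] assms by linarith
  next
    case 3
    then show ?thesis
      using base_gap_mono[of "n - 1 - Suc i" "n - 1 - i"] by (simp add: base_profile_def)
  qed
qed

lemma base_rate_bounds: "1/2 \<le> base_rate n \<rho>" "base_rate n \<rho> < 1"
proof -
  have "\<rho> ^ (n div 2) \<le> \<rho> ^ 1"
    using rho_pos rho_le n_ge_2 by (intro power_decreasing) auto
  then show "1/2 \<le> base_rate n \<rho>" "base_rate n \<rho> < 1"
    using rho_pos rho_le by (auto simp: base_rate_def)
qed

lemma base_profile_succ_le_gap:
  assumes "1 \<le> i" "2 * i + 1 < n"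
  shows "\<rho> * (1 + base_profile n \<rho> (i + 1)) \<le> base_gap n \<rho> i"
proof -
  consider "2 * (i + 1) + 1 < n" | "2 * (i + 1) + 1 = n" | "n \<le> 2 * (i + 1)"
    by linarith
  then show ?thesis
  proof cases
    case 1
    then show ?thesis
      using base_gap_eq_rho_mult[of i] assms by (simp add: base_profile_def)
  next
    case 2
    then have "n div 2 - i = 1"
      by simp
    then have "base_gap n \<rho> i = 2 * \<rho> / (1 + \<rho>)"
      using assms by (simp add: base_gap_def)
    moreover have "\<rho> \<le> 2 * \<rho> / (1 + \<rho>)"
      using rho_pos rho_le by (simp add: field_simps)
    ultimately show ?thesis
      using 2 by (simp add: base_profile_def)
  next
    case 3
    then have "n = 2 * i + 2"
      using assms by arith
    then have "base_gap n \<rho> i = 2 * \<rho> / (1 + \<rho>)"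
      using assms by (simp add: base_gap_def)
    then have "base_gap n \<rho> i + \<rho> * base_gap n \<rho> i = 2 * \<rho>"
      using rho_pos by (simp add: field_simps)
    moreover have "\<rho> * (1 + base_profile n \<rho> (i + 1)) = 2 * \<rho> - \<rho> * base_gap n \<rho> i"
      using \<open>n = 2 * i + 2\<close> by (simp add: base_profile_def algebra_simps)
    ultimately show ?thesis
      by linarith
  qed
qed

lemma base_profile_second_le: "\<rho> * (1 + base_profile n \<rho> 1) \<le> 1 - base_rate n \<rho>"
proof (cases "n div 2 = 1")
  case True
  then show ?thesis
    using base_profile_le[of 1] n_ge_2 rho_pos by (simp add: base_rate_def)
next
  case False
  then have "3 < n" "n div 2 = Suc (n div 2 - 1)"
    using n_ge_2 by auto
  then have "1 + base_profile n \<rho> 1 = 2 * \<rho> ^ (n div 2 - 1) / (1 + \<rho>)"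
    by (simp add: base_profile_def base_gap_def)
  also have "\<dots> \<le> 2 * \<rho> ^ (n div 2 - 1)"
    using rho_pos by (simp add: field_simps)
  finally have "\<rho> * (1 + base_profile n \<rho> 1) \<le> \<rho> * (2 * \<rho> ^ (n div 2 - 1))"
    using rho_pos by (intro mult_left_mono) auto
  also have "\<dots> = 2 * \<rho> ^ (n div 2)"
    by (subst \<open>n div 2 = Suc (n div 2 - 1)\<close>) simp
  finally show ?thesis
    by (simp add: base_rate_def)
qed

lemma base_profile_step_left:
  assumes "2 * i + 1 < n"
  shows "-(1 - \<rho>) + \<rho> * base_profile n \<rho> (i + 1) \<le> base_rate n \<rho> * base_profile n \<rho> i"
proof -
  let ?g = "base_gap n \<rho> i" and ?l = "base_rate n \<rho>"
  have "0 \<le> (1 - ?l) * (1 - ?g)"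
    using base_rate_bounds base_gap_le_one[OF assms] by simp
  moreover have "\<rho> * (1 + base_profile n \<rho> (i + 1)) \<le> (1 - ?l) * (1 - ?g) + ?g"
  proof (cases "i = 0")
    case True
    then show ?thesis
      using base_profile_second_le by (simp add: base_gap_def)
  next
    case False
    then show ?thesis
      using base_profile_succ_le_gap[of i] assms \<open>0 \<le> (1 - ?l) * (1 - ?g)\<close> by simp
  qed
  moreover have "?l * base_profile n \<rho> i = -1 + ((1 - ?l) * (1 - ?g) + ?g)"
    using assms by (simp add: base_profile_def algebra_simps)
  ultimately show ?thesis
    by (simp add: algebra_simps)
qed

lemma base_profile_step:
  assumes "i < n"
  shows "(1 - \<rho>) * base_profile n \<rho> 0 + \<rho> * base_profile n \<rho> (min (i + 1) (n - 1))
           \<le> base_rate n \<rho> * base_profile n \<rho> i"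
    and "base_rate n \<rho> * base_profile n \<rho> i
           \<le> \<rho> * base_profile n \<rho> (max (i - 1) 0) + (1 - \<rho>) * base_profile n \<rho> (n - 1)"
proof -
  let ?z = "base_profile n \<rho>" and ?l = "base_rate n \<rho>"
  have l: "0 \<le> ?l"
    using base_rate_bounds by simp
  show "(1 - \<rho>) * ?z 0 + \<rho> * ?z (min (i + 1) (n - 1)) \<le> ?l * ?z i"
  proof (cases "2 * i + 1 < n")
    case True
    then show ?thesis
      using base_profile_step_left[OF True] base_profile_first by simp
  next
    case False
    have "\<rho> * ?z (min (i + 1) (n - 1)) \<le> \<rho>"
      using base_profile_le[of "min (i + 1) (n - 1)"] n_ge_2 rho_pos by (simp add: mult_left_le)
    moreover have "0 \<le> ?l * ?z i"
      using base_profile_nonneg[of i] assms False l by simp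
    ultimately show ?thesis
      using base_profile_first rho_le by simp
  qed
  show "?l * ?z i \<le> \<rho> * ?z (max (i - 1) 0) + (1 - \<rho>) * ?z (n - 1)"
  proof (cases "2 * i + 1 \<le> n")
    case True
    have "-\<rho> \<le> \<rho> * ?z (max (i - 1) 0)"
      using mult_left_mono[OF base_profile_ge[of "max (i - 1) 0"], of \<rho>] assms rho_pos by simp
    moreover have "?l * ?z i \<le> 0"
      using base_profile_nonpos[OF True] l by (simp add: mult_nonneg_nonpos)
    ultimately show ?thesis
      using base_profile_last rho_le by simp
  next
    case False
    define j where "j = n - 1 - i"
    have j: "2 * j + 1 < n" "i = n - 1 - j" "max (i - 1) 0 = n - 1 - (j + 1)"
      using False assms by (auto simp: j_def)
    have "?z i = - ?z j" "?z (max (i - 1) 0) = - ?z (j + 1)"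
      using base_profile_reflect[of j] base_profile_reflect[of "j + 1"] j by auto
    then show ?thesis
      using base_profile_step_left[OF j(1)] base_profile_last by simp
  qed
qed

lemma base_profile_twist_step:
  assumes "0 \<le> c"
  shows "twist_step \<rho> [(0, n - 1)] (\<lambda>i. a + c * base_profile n \<rho> i)
           (\<lambda>i. a + c * (base_rate n \<rho> * base_profile n \<rho> i))"
  unfolding twist_step_def
proof clarsimp
  let ?z = "base_profile n \<rho>"
  fix i
  assume "i \<le> n - Suc 0"
  then have i: "i < n"
    using n_ge_2 by simp
  have "(1 - \<rho>) * (a + c * ?z 0) + \<rho> * (a + c * ?z (min (Suc i) (n - Suc 0))) =
      a + c * ((1 - \<rho>) * ?z 0 + \<rho> * ?z (min (i + 1) (n - 1)))"
    by (simp add: algebra_simps)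
  also have "\<dots> \<le> a + c * (base_rate n \<rho> * ?z i)"
    using base_profile_step(1)[OF i] assms by (intro add_left_mono mult_left_mono)
  finally have lower: "(1 - \<rho>) * (a + c * ?z 0) + \<rho> * (a + c * ?z (min (Suc i) (n - Suc 0)))
      \<le> a + c * (base_rate n \<rho> * ?z i)" .
  have "a + c * (base_rate n \<rho> * ?z i) \<le> a + c * (\<rho> * ?z (max (i - 1) 0) + (1 - \<rho>) * ?z (n - 1))"
    using base_profile_step(2)[OF i] assms by (intro add_left_mono mult_left_mono)
  also have "\<dots> = \<rho> * (a + c * ?z (i - Suc 0)) + (1 - \<rho>) * (a + c * ?z (n - Suc 0))"
    by (simp add: algebra_simps)
  finally show "(1 - \<rho>) * (a + c * ?z 0) + \<rho> * (a + c * ?z (min (Suc i) (n - Suc 0)))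
      \<le> a + c * (base_rate n \<rho> * ?z i) \<and>
      a + c * (base_rate n \<rho> * ?z i) \<le> \<rho> * (a + c * ?z (i - Suc 0)) + (1 - \<rho>) * (a + c * ?z (n - Suc 0))"
    using lower by simp
qed

lemma confined_twist_energy_ge_single_block:
  assumes s: "0 < s"
  shows "confined_twist_energy_ge n 1 \<rho> s (1 / (4 * s * \<rho> ^ (n div 2)))"
proof -
  let ?z = "base_profile n \<rho>"
  define l where "l = base_rate n \<rho>"
  have l: "1/2 \<le> l" "l < 1"
    using base_rate_bounds by (auto simp: l_def)
  define x where "x t i = 1/2 + (l ^ t / 2) * ?z i" for t i
  define P :: "nat \<Rightarrow> (nat \<times> nat) list" where "P t = [(0, n - 1)]" for t
  have lt: "0 \<le> l ^ t" "l ^ t \<le> 1" for t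
    using l by (auto intro: power_le_one)
  have range: "x t i \<in> {0..1}" if "i < n" for t i
  proof -
    have "\<bar>?z i\<bar> \<le> 1"
      using base_profile_ge[OF that] base_profile_le[OF that] by simp
    then have "(l ^ t / 2) * \<bar>?z i\<bar> \<le> (1/2) * 1"
      using lt by (intro mult_mono) auto
    then have "\<bar>(l ^ t / 2) * ?z i\<bar> \<le> 1/2"
      using lt by (simp add: abs_mult)
    then show ?thesis
      by (simp add: x_def abs_le_iff)
  qed
  have sys: "twist_system n 1 \<rho> x P"
    unfolding twist_system_def
  proof (intro conjI allI impI)
    fix t
    show "sorted_pos n (x t)"
      unfolding sorted_pos_def x_def
      using base_profile_mono lt by (auto intro: mult_left_mono)
    show "twist_partition n 1 (P t)"
      by (simp add: twist_partition_def P_def)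
    have "x (Suc t) = (\<lambda>i. 1/2 + (l ^ t / 2) * (l * ?z i))"
      by (simp add: x_def fun_eq_iff)
    then show "twist_step \<rho> (P t) (x t) (x (Suc t))"
      using base_profile_twist_step[of "l ^ t / 2" "1/2"] lt
      by (simp add: P_def l_def x_def[abs_def])
  qed (use range in auto)
  have "x t (n - 1) - x t 0 = l ^ t" for t
    using base_profile_first base_profile_last by (simp add: x_def)
  then have energy: "s_energy s x P = (\<Sum>t. ennreal ((l ^ t) powr s))"
    by (simp add: s_energy_def P_def)
  have "2 * s * (1 - l) = 4 * s * \<rho> ^ (n div 2)"
    by (simp add: l_def base_rate_def)
  then have "ennreal (1 / (4 * s * \<rho> ^ (n div 2))) \<le> s_energy s x P"
    using suminf_powr_power_ge[OF l s] unfolding energy by metis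
  then show ?thesis
    unfolding confined_twist_energy_ge_def using sys range by blast
qed

end

text \<open>Epoch \<open>j\<close> lasts \<open>T + 1\<close> steps. In the first \<open>T\<close>, agent 0 rests at \<open>nest_anchor \<rho> j\<close> in a
  singleton block while the other agents run the first \<open>T\<close> steps of the inner system, scaled by
  \<open>\<rho> L\<^sub>j\<close> and shifted by \<open>nest_anchor \<rho> j + L\<^sub>j\<close>, where \<open>L\<^sub>j = nest_width \<rho> j\<close>. The last step
  uses a single block and moves everybody to the initial configuration of epoch \<open>j + 1\<close>.\<close>
definition nest_rate :: "real \<Rightarrow> real" where
  "nest_rate \<rho> = 1 - 3 * \<rho> - \<rho> ^ 2"

definition nest_width :: "real \<Rightarrow> nat \<Rightarrow> real" where
  "nest_width \<rho> j = nest_rate \<rho> ^ j / 2"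

definition nest_anchor :: "real \<Rightarrow> nat \<Rightarrow> real" where
  "nest_anchor \<rho> j = (\<Sum>i<j. \<rho> * (1 + \<rho>) * nest_width \<rho> i)"

definition nest_pos :: "real \<Rightarrow> nat \<Rightarrow> (nat \<Rightarrow> nat \<Rightarrow> real) \<Rightarrow> nat \<Rightarrow> nat \<Rightarrow> real" where
  "nest_pos \<rho> T x' t =
     prepend_agent (nest_anchor \<rho> (t div Suc T))
       (nest_anchor \<rho> (t div Suc T) + nest_width \<rho> (t div Suc T))
       (\<rho> * nest_width \<rho> (t div Suc T)) (x' (t mod Suc T))"

definition nest_blocks :: "nat \<Rightarrow> nat \<Rightarrow> (nat \<Rightarrow> (nat \<times> nat) list) \<Rightarrow> nat \<Rightarrow> (nat \<times> nat) list" where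
  "nest_blocks n' T P' t =
     (if t mod Suc T < T then (0, 0) # shift_blocks (P' (t mod Suc T)) else [(0, n')])"

context
  fixes \<rho> :: real
  assumes rho_pos: "0 < \<rho>" and rho_le: "\<rho> \<le> 1/8"
begin

lemma nest_rate_bounds: "1/2 \<le> nest_rate \<rho>" "nest_rate \<rho> < 1" "1 - nest_rate \<rho> \<le> 4 * \<rho>"
proof -
  have "\<rho> ^ 2 \<le> \<rho> / 8"
    using rho_pos rho_le by (simp add: power2_eq_square mult_left_mono[of \<rho> "1/8" \<rho>, simplified])
  then show "1/2 \<le> nest_rate \<rho>" "nest_rate \<rho> < 1" "1 - nest_rate \<rho> \<le> 4 * \<rho>"
    using rho_pos rho_le zero_le_power2[of \<rho>] unfolding nest_rate_def by linarith+
qed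

lemma nest_width_bounds: "0 < nest_width \<rho> j" "nest_width \<rho> j \<le> 1/2"
  using nest_rate_bounds by (auto simp: nest_width_def power_le_one)

lemma nest_width_Suc: "nest_width \<rho> (Suc j) = nest_rate \<rho> * nest_width \<rho> j"
  by (simp add: nest_width_def)

lemma nest_width_powr:
  "(\<rho> * nest_width \<rho> j) powr s = (\<rho> / 2) powr s * (nest_rate \<rho> powr s) ^ j"
proof -
  have "\<rho> * nest_width \<rho> j = \<rho> / 2 * nest_rate \<rho> ^ j"
    by (simp add: nest_width_def)
  then show ?thesis
    by (simp only: powr_mult power_powr_commute)
qed

lemma nest_anchor_Suc: "nest_anchor \<rho> (Suc j) = nest_anchor \<rho> j + \<rho> * (1 + \<rho>) * nest_width \<rho> j"
  by (simp add: nest_anchor_def)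

lemma nest_anchor_nonneg: "0 \<le> nest_anchor \<rho> j"
  unfolding nest_anchor_def using rho_pos less_imp_le[OF nest_width_bounds(1)] by (simp add: sum_nonneg)

lemma nest_anchor_width_le: "nest_anchor \<rho> j + nest_width \<rho> j \<le> 1/2"
proof (induction j)
  case 0
  then show ?case
    by (simp add: nest_anchor_def nest_width_def)
next
  case (Suc j)
  have "nest_anchor \<rho> (Suc j) + nest_width \<rho> (Suc j) = nest_anchor \<rho> j + (1 - 2 * \<rho>) * nest_width \<rho> j"
    by (simp add: nest_anchor_Suc nest_width_Suc nest_rate_def algebra_simps power2_eq_square)
  also have "\<dots> \<le> nest_anchor \<rho> j + nest_width \<rho> j"
    using rho_pos nest_width_bounds[of j] by (simp add: algebra_simps)
  finally show ?case
    using Suc.IH by simp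
qed

lemma twist_step_reset:
  assumes "1 \<le> n" "0 \<le> L"
    and x0: "x 0 = X" and x: "\<And>i. 1 \<le> i \<Longrightarrow> i \<le> n \<Longrightarrow> X + L \<le> x i \<and> x i \<le> X + (1 + \<rho>) * L"
    and y0: "y 0 = X + \<rho> * (1 + \<rho>) * L"
    and y: "\<And>i. 1 \<le> i \<Longrightarrow> i \<le> n \<Longrightarrow> X + (1 - 2 * \<rho>) * L \<le> y i \<and> y i \<le> X + (1 - \<rho>) * L"
  shows "twist_step \<rho> [(0, n)] x y"
proof -
  have "\<rho> * \<rho> \<le> \<rho> * (1/8)"
    using rho_pos rho_le by (intro mult_left_mono) auto
  then have "\<rho> * (1 + \<rho>) \<le> 1 - 2 * \<rho>"
    using rho_le by (simp add: algebra_simps)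
  then have "\<rho> * (1 + \<rho>) * L \<le> (1 - 2 * \<rho>) * L" "(1 - 2 * \<rho>) * L \<le> (1 - \<rho>) * L"
    using \<open>0 \<le> L\<close> rho_pos by (auto intro: mult_right_mono)
  then have y_range: "X + \<rho> * (1 + \<rho>) * L \<le> y i \<and> y i \<le> X + (1 - \<rho>) * L" if "i \<le> n" for i
    using y[of i] y0 that by (cases "i = 0") auto
  have x_range: "X \<le> x i \<and> x i \<le> X + (1 + \<rho>) * L" if "i \<le> n" for i
    using x[of i] x0 that \<open>0 \<le> L\<close> rho_pos by (cases "i = 0") (auto simp: algebra_simps)
  have lower: "(1 - \<rho>) * x 0 + \<rho> * x k \<le> X + \<rho> * (1 + \<rho>) * L" if "k \<le> n" for k
  proof -
    have "\<rho> * x k \<le> \<rho> * (X + (1 + \<rho>) * L)"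
      using x_range[OF that] rho_pos by (intro mult_left_mono) auto
    then show ?thesis
      using x0 by (simp add: algebra_simps)
  qed
  have upper: "X + (1 - \<rho>) * L \<le> \<rho> * x k + (1 - \<rho>) * x n" if "k \<le> n" for k
  proof -
    have "\<rho> * X \<le> \<rho> * x k"
      using x_range[OF that] rho_pos by (intro mult_left_mono) auto
    moreover have "(1 - \<rho>) * (X + L) \<le> (1 - \<rho>) * x n"
      using x[of n] \<open>1 \<le> n\<close> rho_le by (intro mult_left_mono) auto
    ultimately show ?thesis
      by (simp add: algebra_simps)
  qed
  show ?thesis
    unfolding twist_step_def
  proof clarsimp
    fix i
    assume "i \<le> n"
    then show "(1 - \<rho>) * x 0 + \<rho> * x (min (Suc i) n) \<le> y i \<and> y i \<le> \<rho> * x (i - Suc 0) + (1 - \<rho>) * x n"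
      using lower[of "min (Suc i) n"] upper[of "i - Suc 0"] y_range[of i] by fastforce
  qed
qed

lemma nest_pos_range:
  assumes conf: "\<And>t i. i < n' \<Longrightarrow> x' t i \<in> {0..1}" and "i < Suc n'"
  shows "nest_pos \<rho> T x' t i \<in> {0..1}"
proof -
  let ?j = "t div Suc T"
  have "\<rho> * nest_width \<rho> ?j * x' (t mod Suc T) (i - 1) \<le> 1/2" if "i \<noteq> 0"
  proof -
    have "x' (t mod Suc T) (i - 1) \<le> 1"
      using conf[of "i - 1"] that assms(2) by auto
    then have "\<rho> * nest_width \<rho> ?j * x' (t mod Suc T) (i - 1) \<le> \<rho> * nest_width \<rho> ?j"
      using rho_pos nest_width_bounds[of ?j] by (intro mult_left_le) auto
    also have "\<dots> \<le> 1 * (1/2)"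
      using rho_pos rho_le nest_width_bounds[of ?j] by (intro mult_mono) auto
    finally show ?thesis
      by simp
  qed
  moreover have "0 \<le> \<rho> * nest_width \<rho> ?j * x' (t mod Suc T) (i - 1)" if "i \<noteq> 0"
    using conf[of "i - 1"] that assms(2) rho_pos nest_width_bounds[of ?j] by auto
  ultimately show ?thesis
    using nest_anchor_nonneg[of ?j] nest_anchor_width_le[of ?j]
      nest_width_bounds[of ?j]
    by (auto simp: nest_pos_def prepend_agent_def)
qed

lemma twist_step_nest_epoch_end:
  assumes conf: "\<And>t i. i < n' \<Longrightarrow> x' t i \<in> {0..1}" and "1 \<le> n'" and "t mod Suc T = T"
  shows "twist_step \<rho> [(0, n')] (nest_pos \<rho> T x' t) (nest_pos \<rho> T x' (Suc t))"
proof -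
  let ?j = "t div Suc T"
  let ?X = "nest_anchor \<rho> ?j" and ?L = "nest_width \<rho> ?j"
  have x: "nest_pos \<rho> T x' t = prepend_agent ?X (?X + ?L) (\<rho> * ?L) (x' T)"
    using assms(3) by (simp add: nest_pos_def)
  have "Suc t div Suc T = Suc ?j" "Suc t mod Suc T = 0"
    using assms(3) by (simp_all add: div_Suc mod_Suc)
  then have y: "nest_pos \<rho> T x' (Suc t) =
      prepend_agent (nest_anchor \<rho> (Suc ?j)) (nest_anchor \<rho> (Suc ?j) + nest_width \<rho> (Suc ?j))
        (\<rho> * nest_width \<rho> (Suc ?j)) (x' 0)"
    by (simp add: nest_pos_def)
  have L: "0 \<le> ?L" "0 \<le> \<rho> * ?L"
    using nest_width_bounds[of ?j] rho_pos by auto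
  show ?thesis
  proof (rule twist_step_reset[OF \<open>1 \<le> n'\<close> L(1)])
    fix i
    assume i: "1 \<le> i" "i \<le> n'"
    then have "x' T (i - 1) \<in> {0..1}" "x' 0 (i - 1) \<in> {0..1}"
      using conf by auto
    then have "0 \<le> \<rho> * ?L * x' T (i - 1)" "\<rho> * ?L * x' T (i - 1) \<le> \<rho> * ?L"
      and w: "0 \<le> \<rho> * ?L * x' 0 (i - 1)" "\<rho> * ?L * x' 0 (i - 1) \<le> \<rho> * ?L"
      using L by (auto simp: mult_left_le)
    then show "?X + ?L \<le> nest_pos \<rho> T x' t i \<and> nest_pos \<rho> T x' t i \<le> ?X + (1 + \<rho>) * ?L"
      using i unfolding x by (simp add: prepend_agent_def algebra_simps)
    have "nest_rate \<rho> * (\<rho> * ?L * x' 0 (i - 1)) \<le> \<rho> * ?L * x' 0 (i - 1)"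
      using w nest_rate_bounds by (intro mult_left_le_one_le) auto
    moreover have "0 \<le> nest_rate \<rho> * (\<rho> * ?L * x' 0 (i - 1))"
      using w nest_rate_bounds by simp
    moreover have "nest_pos \<rho> T x' (Suc t) i =
        ?X + (1 - 2 * \<rho>) * ?L + nest_rate \<rho> * (\<rho> * ?L * x' 0 (i - 1))"
      using i unfolding y
      by (simp add: prepend_agent_def nest_anchor_Suc nest_width_Suc nest_rate_def algebra_simps
          power2_eq_square)
    ultimately show "?X + (1 - 2 * \<rho>) * ?L \<le> nest_pos \<rho> T x' (Suc t) i \<and>
        nest_pos \<rho> T x' (Suc t) i \<le> ?X + (1 - \<rho>) * ?L"
      using w by (simp add: algebra_simps)
  qed (simp_all add: x y prepend_agent_def nest_anchor_Suc)
qed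

lemma nest_twist_system:
  assumes sys: "twist_system n' m' \<rho> x' P'"
    and conf: "\<And>t i. i < n' \<Longrightarrow> x' t i \<in> {0..1}" and "1 \<le> n'"
  shows "twist_system (Suc n') (Suc m') \<rho> (nest_pos \<rho> T x') (nest_blocks n' T P')"
  unfolding twist_system_def
proof (intro conjI allI impI)
  fix t
  let ?j = "t div Suc T" and ?r = "t mod Suc T"
  let ?X = "nest_anchor \<rho> ?j" and ?L = "nest_width \<rho> ?j"
  have x: "nest_pos \<rho> T x' t = prepend_agent ?X (?X + ?L) (\<rho> * ?L) (x' ?r)"
    by (simp add: nest_pos_def)
  have L: "0 \<le> ?L" "0 \<le> \<rho> * ?L"
    using nest_width_bounds[of ?j] rho_pos by auto
  have "0 \<le> \<rho> * ?L * x' ?r 0"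
    using conf[of 0] \<open>1 \<le> n'\<close> L by simp
  then show "sorted_pos (Suc n') (nest_pos \<rho> T x' t)"
    unfolding x using sys L by (intro sorted_pos_prepend_agent) (auto simp: twist_system_def)
  show "twist_partition (Suc n') (Suc m') (nest_blocks n' T P' t)"
    using sys twist_partition_shift[of n' m' "P' ?r"] \<open>1 \<le> n'\<close>
    by (auto simp: nest_blocks_def twist_system_def twist_partition_def)
  show "twist_step \<rho> (nest_blocks n' T P' t) (nest_pos \<rho> T x' t) (nest_pos \<rho> T x' (Suc t))"
  proof (cases "?r < T")
    case True
    then have "Suc t div Suc T = ?j" "Suc t mod Suc T = Suc ?r"
      by (simp_all add: div_Suc mod_Suc)
    then have "nest_pos \<rho> T x' (Suc t) = prepend_agent ?X (?X + ?L) (\<rho> * ?L) (x' (Suc ?r))"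
      by (simp add: nest_pos_def)
    then show ?thesis
      unfolding x using True sys L
      by (simp add: nest_blocks_def twist_system_def twist_step_shift)
  next
    case False
    then have "?r = T"
      using mod_less_divisor[of "Suc T" t] by linarith
    then show ?thesis
      using twist_step_nest_epoch_end[OF conf \<open>1 \<le> n'\<close>] False by (simp add: nest_blocks_def)
  qed
qed (use nest_pos_range[OF conf] in auto)

lemma nest_energy_ge:
  "(\<Sum>j. ennreal ((\<rho> * nest_width \<rho> j) powr s) * (\<Sum>r<T. blocks_energy s (x' r) (P' r)))
     \<le> s_energy s (nest_pos \<rho> T x') (nest_blocks n' T P')"
proof -
  define e where "e = (\<lambda>t. blocks_energy s (nest_pos \<rho> T x' t) (nest_blocks n' T P' t))"
  have "e (r + j * Suc T) = ennreal ((\<rho> * nest_width \<rho> j) powr s) * blocks_energy s (x' r) (P' r)"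
    if "r < T" for r j
  proof -
    have "(r + j * Suc T) div Suc T = j" "(r + j * Suc T) mod Suc T = r"
      using that by (simp_all del: mult_Suc_right)
    then show ?thesis
      using that by (simp add: e_def nest_pos_def nest_blocks_def blocks_energy_shift)
  qed
  then have "ennreal ((\<rho> * nest_width \<rho> j) powr s) * (\<Sum>r<T. blocks_energy s (x' r) (P' r))
      \<le> (\<Sum>r<Suc T. e (r + j * Suc T))" for j
    by (simp add: sum_distrib_left)
  then have "(\<Sum>j. ennreal ((\<rho> * nest_width \<rho> j) powr s) * (\<Sum>r<T. blocks_energy s (x' r) (P' r)))
      \<le> (\<Sum>j. \<Sum>r<Suc T. e (r + j * Suc T))"
    by (intro suminf_le) auto
  also have "\<dots> \<le> suminf e"
    by (rule suminf_sum_blocks_le)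
  finally show ?thesis
    by (simp add: e_def s_energy_eq_suminf_blocks_energy)
qed

lemma nest_gain_ge:
  assumes s: "0 < s" "s \<le> 1" "s * ln (1 / \<rho>) \<le> 1"
  shows "1 / (96 * \<rho> * s) \<le> (\<rho> / 2) powr s / 2 / (1 - nest_rate \<rho> powr s)"
proof -
  let ?q = "nest_rate \<rho> powr s"
  have "1/3 * (1/2) \<le> \<rho> powr s * (1/2) powr s"
    using powr_ge_one_third[OF rho_pos s(3)] powr_mono'[of s 1 "1/2"] s by (intro mult_mono) auto
  moreover have "(\<rho> / 2) powr s = \<rho> powr s * (1/2) powr s"
    using powr_mult[of \<rho> "1/2" s] by simp
  ultimately have gain: "1 / 12 \<le> (\<rho> / 2) powr s / 2"
    by simp
  have "0 < 1 - ?q"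
    using nest_rate_bounds s by (simp add: powr01_less_one)
  moreover have "1 - ?q \<le> 2 * s * (1 - nest_rate \<rho>)"
    using one_minus_powr_le[of "nest_rate \<rho>" s] nest_rate_bounds s by simp
  moreover have "2 * s * (1 - nest_rate \<rho>) \<le> 2 * s * (4 * \<rho>)"
    using nest_rate_bounds s by (intro mult_left_mono) auto
  ultimately have "(1 / 12) / (8 * \<rho> * s) \<le> (\<rho> / 2) powr s / 2 / (1 - ?q)"
    using frac_le[OF _ gain, of "1 - ?q" "8 * \<rho> * s"] by (simp add: mult_ac)
  then show ?thesis
    by simp
qed

lemma confined_twist_energy_ge_nest:
  assumes "confined_twist_energy_ge n' m' \<rho> s E" "0 < E" "1 \<le> n'"
    and s: "0 < s" "s \<le> 1" "s * ln (1 / \<rho>) \<le> 1"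
  shows "confined_twist_energy_ge (Suc n') (Suc m') \<rho> s (E / (96 * \<rho> * s))"
proof -
  obtain x' P' where sys: "twist_system n' m' \<rho> x' P'"
    and conf: "\<And>t i. i < n' \<Longrightarrow> x' t i \<in> {0..1}" and energy: "ennreal E \<le> s_energy s x' P'"
    using assms(1) unfolding confined_twist_energy_ge_def by blast
  have "ennreal (E / 2) < ennreal E"
    using \<open>0 < E\<close> by (simp add: ennreal_lessI)
  then obtain T where T: "ennreal (E / 2) < (\<Sum>r<T. blocks_energy s (x' r) (P' r))"
    using less_suminf_partial_sum energy by (fastforce simp: s_energy_eq_suminf_blocks_energy)
  define q where "q = nest_rate \<rho> powr s"
  define C where "C = (\<rho> / 2) powr s * (E / 2)"
  have q: "0 \<le> q" "q < 1"
    using nest_rate_bounds s by (auto simp: q_def powr01_less_one)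
  have "ennreal (C * q ^ j) = ennreal ((\<rho> * nest_width \<rho> j) powr s) * ennreal (E / 2)" for j
    using \<open>0 < E\<close> by (simp add: C_def q_def nest_width_powr ennreal_mult[symmetric] mult_ac)
  then have "ennreal (C * q ^ j) \<le>
      ennreal ((\<rho> * nest_width \<rho> j) powr s) * (\<Sum>r<T. blocks_energy s (x' r) (P' r))" for j
    using less_imp_le[OF T] by (simp add: mult_left_mono)
  then have "(\<Sum>j. ennreal (C * q ^ j)) \<le>
      (\<Sum>j. ennreal ((\<rho> * nest_width \<rho> j) powr s) * (\<Sum>r<T. blocks_energy s (x' r) (P' r)))"
    by (intro suminf_le) auto
  also have "\<dots> \<le> s_energy s (nest_pos \<rho> T x') (nest_blocks n' T P')"
    by (rule nest_energy_ge)
  finally have nested_energy: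
    "(\<Sum>j. ennreal (C * q ^ j)) \<le> s_energy s (nest_pos \<rho> T x') (nest_blocks n' T P')" .
  have geometric: "(\<Sum>j. ennreal (C * q ^ j)) = ennreal (C / (1 - q))"
    using q \<open>0 < E\<close> by (intro suminf_geometric_ennreal) (auto simp: C_def)
  have "E * (1 / (96 * \<rho> * s)) \<le> E * ((\<rho> / 2) powr s / 2 / (1 - q))"
    using nest_gain_ge[OF s] \<open>0 < E\<close> by (intro mult_left_mono) (auto simp: q_def)
  then have "E / (96 * \<rho> * s) \<le> C / (1 - q)"
    by (simp add: C_def mult.commute)
  then have "ennreal (E / (96 * \<rho> * s)) \<le> s_energy s (nest_pos \<rho> T x') (nest_blocks n' T P')"
    using order.trans[OF ennreal_leI nested_energy[unfolded geometric]] by blast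
  moreover have "\<forall>t i. i < Suc n' \<longrightarrow> nest_pos \<rho> T x' t i \<in> {0..1}"
    using nest_pos_range[OF conf] by (intro allI impI)
  ultimately show ?thesis
    unfolding confined_twist_energy_ge_def using nest_twist_system[OF sys conf \<open>1 \<le> n'\<close>] by blast
qed

end

lemma exponent_bounds:
  fixes \<rho> s :: real
  assumes "0 < \<rho>" "\<rho> \<le> 1/3" "1 \<le> m" "0 < s" "s \<le> 1 / (real m * ln (1 / \<rho>))"
  shows "s * ln (1 / \<rho>) \<le> 1" "s \<le> 1"
proof -
  have ln: "1 \<le> ln (1 / \<rho>)"
    using assms by (intro one_le_ln_inverse) auto
  then have "s * (real m * ln (1 / \<rho>)) \<le> 1"
    using assms by (simp add: le_divide_eq mult_ac)
  moreover have "s * ln (1 / \<rho>) \<le> s * (real m * ln (1 / \<rho>))"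
    using ln assms by (intro mult_left_mono) auto
  moreover have "s * 1 \<le> s * ln (1 / \<rho>)"
    using ln assms by (intro mult_left_mono) auto
  ultimately show "s * ln (1 / \<rho>) \<le> 1" "s \<le> 1"
    by linarith+
qed

lemma confined_twist_energy_lower_bound:
  assumes \<rho>: "0 < \<rho>" "\<rho> \<le> 1/8" and s: "0 < s" "s \<le> 1" "s * ln (1 / \<rho>) \<le> 1"
    and "1 \<le> m" "m < n"
  shows "confined_twist_energy_ge n m \<rho> s ((1/96 / s) ^ m * (1 / \<rho>) ^ ((n + m - 1) div 2))"
  using assms(6,7)
proof (induction m arbitrary: n rule: nat_induct_at_least)
  case base
  have "(1/96 / s) * (1 / \<rho>) ^ (n div 2) \<le> 1 / (4 * s * \<rho> ^ (n div 2))"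
    using \<rho> s by (simp add: field_simps power_one_over)
  then show ?case
    using confined_twist_energy_ge_single_block[of n \<rho> s] base \<rho> s
    by (auto intro: confined_twist_energy_ge_mono)
next
  case (Suc m)
  then obtain n' where n': "n = Suc n'" "m < n'"
    by (cases n) auto
  have "(1/96 / s) ^ m * (1 / \<rho>) ^ ((n' + m - 1) div 2) / (96 * \<rho> * s) =
      (1/96 / s) ^ Suc m * (1 / \<rho>) ^ ((n + Suc m - 1) div 2)"
  proof -
    have "(n + Suc m - 1) div 2 = Suc ((n' + m - 1) div 2)"
      using n' \<open>1 \<le> m\<close> by simp
    then show ?thesis
      by (simp add: field_simps)
  qed
  moreover have "0 < (1/96 / s) ^ m * (1 / \<rho>) ^ ((n' + m - 1) div 2)"
    using \<rho> s by simp
  ultimately show ?case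
    using confined_twist_energy_ge_nest[OF \<rho> Suc.IH[OF n'(2)] _ _ s] n' \<open>1 \<le> m\<close> by simp
qed

theorem theorem7:
  shows "\<exists>c::real. c > 0 \<and> (\<exists>\<rho>0::real. 0 < \<rho>0 \<and> \<rho>0 \<le> 1/2 \<and>
    (\<forall>(\<rho>::real) (n::nat) (m::nat) (s::real).
       0 < \<rho> \<and> \<rho> \<le> \<rho>0 \<and> 2 \<le> n \<and> 1 \<le> m \<and> m \<le> n - 1 \<and>
       0 < s \<and> s \<le> 1 / (real m * ln (1 / \<rho>)) \<longrightarrow>
       E_TW n \<rho> m s \<ge> ennreal ((c / s) ^ m * (1 / \<rho>) ^ ((n + m - 1) div 2))))"
proof (intro exI conjI allI impI)
  fix \<rho> s :: real and n m :: nat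
  assume "0 < \<rho> \<and> \<rho> \<le> 1/8 \<and> 2 \<le> n \<and> 1 \<le> m \<and> m \<le> n - 1 \<and> 0 < s \<and>
    s \<le> 1 / (real m * ln (1 / \<rho>))"
  then have \<rho>: "0 < \<rho>" "\<rho> \<le> 1/8" and m: "1 \<le> m" "m < n" and s: "0 < s"
    and "s * ln (1 / \<rho>) \<le> 1" "s \<le> 1"
    using exponent_bounds[of \<rho> m s] by auto
  then show "ennreal ((1/96 / s) ^ m * (1 / \<rho>) ^ ((n + m - 1) div 2)) \<le> E_TW n \<rho> m s"
    using confined_twist_energy_lower_bound[OF \<rho> s _ _ m] by (intro E_TW_ge_if_confined_twist_energy_ge)
qed auto

end
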